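(* Let $U,V$ be disjoint finite sets, ${\bf s}\in\mathbb N^U$, ${\bf t}\in\mathbb N^V$, ${\bf d}=({\bf s},{\bf t})$, and let $\mathcal B({\bf s},{\bf t})$ be a uniformly random bipartite graph on $U\cup V$ with degree sequence ${\bf d}$. Let $H_1,H_2$ be two edge-disjoint bipartite graphs on $U\cup V$ with ${\bf d}^{H_1}\le{\bf d}$ componentwise, and let $uv\in(U\times V)\setminus(H_1\cup H_2)$. Define \[\xi=\frac{J({\bf d})+\Delta({\bf d})(1+\Delta(H_2))+(d_u-d_u^{H_1})(d_v-d_v^{H_1})}{M-e(H_1)}+\frac{e(H_2)\Delta({\bf s})\Delta({\bf t})}{(M-e(H_1))^2}.\] If $\xi=o(1)$, then \[\mathbb P\big(uv\in\mathcal B({\bf s},{\bf t})\,\big|\,H_1\subseteq\mathcal B({\bf s},{\bf t}),\ H_2\cap\mathcal B({\bf s},{\bf t})=\emptyset\big)=\frac{(d_u-d_u^{H_1})(d_v-d_v^{H_1})}{M-e(H_1)}\big(1+O(\xi)\big).\]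
   Context: $d_w$ denotes the prescribed degree of vertex $w$ (so $d_w=s_w$ for $w\in U$, $d_w=t_w$ for $w\in V$), ${\bf d}^{H}$ and $d^{H}_w$ denote the degree sequence of $H$ and the degree of $w$ in $H$, $e(H)$ and $\Delta(H)$ the number of edges and maximum degree of $H$, and $\Delta(\cdot)$ of a sequence its maximum entry. With entries ordered decreasingly, $s_1\ge s_2\ge\cdots$ and $t_1\ge t_2\ge\cdots$, $M=M({\bf d})=\sum_{u\in U}s_u=\sum_{v\in V}t_v$ and $J({\bf d})=\sum_{i=1}^{s_1}t_i+\sum_{j=1}^{t_1}s_j$. *)

theory Defs
  imports Complex_Main "HOL-Library.Multiset"
begin

text \<open>A degree sequence is a function
  d :: nat \<Rightarrow> nat, read on U (this is s) and on V (this is t).\<close>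

definition degG :: "(nat \<times> nat) set \<Rightarrow> nat \<Rightarrow> nat" where
  "degG G w = card {e \<in> G. fst e = w} + card {e \<in> G. snd e = w}"

definition bigraphs :: "nat set \<Rightarrow> nat set \<Rightarrow> (nat \<Rightarrow> nat) \<Rightarrow> (nat \<times> nat) set set" where
  "bigraphs U V d = {G. G \<subseteq> U \<times> V \<and> (\<forall>w \<in> U \<union> V. degG G w = d w)}"

definition maxdeg :: "nat set \<Rightarrow> nat set \<Rightarrow> (nat \<times> nat) set \<Rightarrow> nat" where
  "maxdeg U V G = Max (insert 0 (degG G ` (U \<union> V)))"

definition maxseq :: "nat set \<Rightarrow> (nat \<Rightarrow> nat) \<Rightarrow> nat" where
  "maxseq A d = Max (insert 0 (d ` A))"

definition desc_seq :: "nat set \<Rightarrow> (nat \<Rightarrow> nat) \<Rightarrow> nat list" where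
  "desc_seq A d = rev (sorted_list_of_multiset (image_mset d (mset_set A)))"

text \<open>M(d) = sum of s = sum of t.\<close>
definition Msum :: "nat set \<Rightarrow> (nat \<Rightarrow> nat) \<Rightarrow> nat" where
  "Msum U d = (\<Sum>u \<in> U. d u)"

text \<open>J(d) = \<Sum>_{i=1}^{s_1} t_i + \<Sum>_{j=1}^{t_1} s_j (entries beyond the length count as 0).\<close>
definition Jd :: "nat set \<Rightarrow> nat set \<Rightarrow> (nat \<Rightarrow> nat) \<Rightarrow> nat" where
  "Jd U V d = sum_list (take (maxseq U d) (desc_seq V d))
             + sum_list (take (maxseq V d) (desc_seq U d))"

definition cond_set :: "nat set \<Rightarrow> nat set \<Rightarrow> (nat \<Rightarrow> nat) \<Rightarrow> (nat \<times> nat) set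
    \<Rightarrow> (nat \<times> nat) set \<Rightarrow> (nat \<times> nat) set set" where
  "cond_set U V d H1 H2 = {G \<in> bigraphs U V d. H1 \<subseteq> G \<and> H2 \<inter> G = {}}"

definition cond_prob :: "nat set \<Rightarrow> nat set \<Rightarrow> (nat \<Rightarrow> nat) \<Rightarrow> (nat \<times> nat) set
    \<Rightarrow> (nat \<times> nat) set \<Rightarrow> nat \<times> nat \<Rightarrow> real" where
  "cond_prob U V d H1 H2 e =
     real (card {G \<in> cond_set U V d H1 H2. e \<in> G}) / real (card (cond_set U V d H1 H2))"

definition xi :: "nat set \<Rightarrow> nat set \<Rightarrow> (nat \<Rightarrow> nat) \<Rightarrow> (nat \<times> nat) set
    \<Rightarrow> (nat \<times> nat) set \<Rightarrow> nat \<Rightarrow> nat \<Rightarrow> real" where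
  "xi U V d H1 H2 u v =
     (real (Jd U V d) + real (maxseq (U \<union> V) d) * (1 + real (maxdeg U V H2))
        + (real (d u) - real (degG H1 u)) * (real (d v) - real (degG H1 v)))
       / (real (Msum U d) - real (card H1))
     + real (card H2) * real (maxseq U d) * real (maxseq V d)
       / (real (Msum U d) - real (card H1))\<^sup>2"

end

theory Submission
  imports Defs
begin

text \<open>
  The proof is a switching argument. Fix an edge \<open>ab\<close> outside \<open>H1 \<union> H2\<close> and split the
  conditional space into the graphs \<open>A\<close> containing \<open>ab\<close> and the graphs \<open>B\<close> avoiding it;
  \<open>B\<close> is itself a conditional space, with \<open>ab\<close> added to \<open>H2\<close>. Trading the edges \<open>ab, xy\<close>
  of a graph in \<open>A\<close> for \<open>ay, xb\<close> preserves all degrees and is reversible, so forward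
  switchings out of \<open>A\<close> and backward switchings out of \<open>B\<close> are equinumerous. With
  \<open>R = M - e(H1)\<close> and residual degrees \<open>r_w = d_w - d_w^H1\<close>, every graph in \<open>A\<close> has at most
  \<open>R\<close> and at least \<open>R - 2J - \<Delta>(d_a^H2 + d_b^H2)\<close> forward switchings, and every graph in
  \<open>B\<close> at most \<open>r_a r_b\<close> backward ones. This gives the upper bound on \<open>|A| / (|A| + |B|)\<close>.
  For the lower bound, the backward candidates \<open>xy\<close> of a graph in \<open>B\<close> that are lost because
  \<open>xy\<close> is already an edge or lies in \<open>H2\<close> are counted by applying the upper bound again
  to conditional spaces with one or two more forced edges; this produces the terms
  \<open>J/R\<close> and \<open>e(H2) \<Delta>(s) \<Delta>(t) / R\<^sup>2\<close> of \<open>\<xi>\<close>.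
\<close>

lemma sum_mset_le_sum_take_sorted:
  fixes L :: "nat list"
  assumes "sorted_wrt (\<ge>) L" "X \<subseteq># mset L" "size X \<le> k"
  shows "sum_mset X \<le> sum_list (take k L)"
  using assms
proof (induction L arbitrary: X k)
  case Nil
  then show ?case by simp
next
  case (Cons h L)
  show ?case
  proof (cases "X = {#}")
    case False
    then obtain k' where k: "k = Suc k'"
      using Cons.prems(3) by (cases k) auto
    obtain z where z: "z \<in># X" and rest: "X - {#z#} \<subseteq># mset L"
    proof (cases "h \<in># X")
      case True
      with Cons.prems(2) show ?thesis
        by (intro that[of h]) (auto simp: subset_eq_diff_conv)
    next
      case False
      with Cons.prems(2) have "X \<subseteq># mset L"
        by (metis Diff_eq_empty_iff_mset minus_add_mset_if_not_in_lhs mset.simps(2))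
      with \<open>X \<noteq> {#}\<close> show ?thesis
        by (metis multiset_nonemptyE diff_subset_eq_self subset_mset.order_trans that)
    qed
    have "z \<in> set (h # L)"
      using z Cons.prems(2) by (metis mset_subset_eqD set_mset_mset)
    then have "z \<le> h"
      using Cons.prems(1) by auto
    moreover have "sum_mset (X - {#z#}) \<le> sum_list (take k' L)"
      using Cons.IH[OF _ rest] Cons.prems(1,3) z k by (simp add: size_Diff_submset)
    ultimately show ?thesis
      using k by (simp add: sum_mset.remove[OF z])
  qed simp
qed

lemma sum_le_sum_take_desc_seq:
  assumes "finite A" "Y \<subseteq> A" "card Y \<le> k"
  shows "sum d Y \<le> sum_list (take k (desc_seq A d))"
proof -
  have "sum d Y = sum_mset (image_mset d (mset_set Y))"
    by (rule sum_unfold_sum_mset)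
  also have "\<dots> \<le> sum_list (take k (desc_seq A d))"
    using assms unfolding desc_seq_def
    by (intro sum_mset_le_sum_take_sorted)
       (auto simp: sorted_wrt_rev image_mset_subseteq_mono subset_imp_msubset_mset_set)
  finally show ?thesis .
qed

lemma maxseq_ge: "finite A \<Longrightarrow> w \<in> A \<Longrightarrow> d w \<le> maxseq A d"
  unfolding maxseq_def by (simp add: Max_ge_iff)

lemma sum_card_filter_swap:
  fixes g :: "'b \<Rightarrow> 'c::semiring_1"
  assumes "finite A" "finite P"
  shows "(\<Sum>G\<in>A. \<Sum>p\<in>{p\<in>P. Q G p}. g p) = (\<Sum>p\<in>P. of_nat (card {G\<in>A. Q G p}) * g p)"
  using assms by (simp add: sum.swap_restrict)

section \<open>Switchings\<close>

lemma degG_eq_sum: "finite G \<Longrightarrow> degG G w = (\<Sum>e\<in>G. of_bool (fst e = w) + of_bool (snd e = w))"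
  by (simp add: degG_def sum.distrib sum_of_bool_eq Int_def)

lemma degG_mono: "finite H' \<Longrightarrow> H \<subseteq> H' \<Longrightarrow> degG H w \<le> degG H' w"
  unfolding degG_def by (intro add_mono card_mono) auto

lemma degG_insert_le:
  assumes "finite H" "fst e \<noteq> snd e"
  shows "degG (insert e H) w \<le> degG H w + 1"
  using assms by (cases "e \<in> H") (auto simp: degG_eq_sum insert_absorb)

definition switch :: "nat \<Rightarrow> nat \<Rightarrow> nat \<Rightarrow> nat \<Rightarrow> (nat \<times> nat) set \<Rightarrow> (nat \<times> nat) set" where
  "switch a b x y G = G - {(a, b), (x, y)} \<union> {(a, y), (x, b)}"

lemma sum_switch:
  fixes g :: "nat \<times> nat \<Rightarrow> 'c::comm_monoid_add"
  assumes "finite G" "(a, b) \<in> G" "(x, y) \<in> G" "(a, y) \<notin> G" "(x, b) \<notin> G"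
    and "g (a, y) + g (x, b) = g (a, b) + g (x, y)"
  shows "sum g (switch a b x y G) = sum g G"
proof -
  let ?K = "G - {(a, b), (x, y)}"
  have distinct: "(a, b) \<noteq> (x, y)" "(a, y) \<noteq> (x, b)"
    using assms(2-5) by auto
  have "sum g (switch a b x y G) = sum g ?K + (g (a, y) + g (x, b))"
    using assms(1,4,5) distinct unfolding switch_def
    by (subst sum.union_disjoint) (auto simp: add.assoc)
  also have "\<dots> = sum g ?K + sum g {(a, b), (x, y)}"
    using assms(6) distinct by simp
  also have "\<dots> = sum g G"
    using assms(1-3) by (subst sum.subset_diff[of "{(a, b), (x, y)}" G]) auto
  finally show ?thesis .
qed

lemma degG_switch:
  assumes "finite G" "(a, b) \<in> G" "(x, y) \<in> G" "(a, y) \<notin> G" "(x, b) \<notin> G"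
  shows "degG (switch a b x y G) w = degG G w"
proof -
  have "finite (switch a b x y G)"
    using assms(1) by (simp add: switch_def)
  then show ?thesis
    using assms by (simp add: degG_eq_sum sum_switch)
qed

lemma switch_switch:
  assumes "(a, b) \<in> G" "(x, y) \<in> G" "(a, y) \<notin> G" "(x, b) \<notin> G"
  shows "switch a y x b (switch a b x y G) = G"
  using assms by (auto simp: switch_def)

definition fwd_switchings ::
    "(nat \<times> nat) set \<Rightarrow> (nat \<times> nat) set \<Rightarrow> nat \<Rightarrow> nat \<Rightarrow> (nat \<times> nat) set \<Rightarrow> (nat \<times> nat) set" where
  "fwd_switchings H1 H2 a b G = {(x, y) \<in> G - H1. (a, y) \<notin> G \<union> H2 \<and> (x, b) \<notin> G \<union> H2}"

definition bwd_candidates :: "(nat \<times> nat) set \<Rightarrow> nat \<Rightarrow> nat \<Rightarrow> (nat \<times> nat) set \<Rightarrow> (nat \<times> nat) set" where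
  "bwd_candidates H1 a b G = {x. (x, b) \<in> G - H1} \<times> {y. (a, y) \<in> G - H1}"

definition bwd_switchings ::
    "(nat \<times> nat) set \<Rightarrow> (nat \<times> nat) set \<Rightarrow> nat \<Rightarrow> nat \<Rightarrow> (nat \<times> nat) set \<Rightarrow> (nat \<times> nat) set" where
  "bwd_switchings H1 H2 a b G = bwd_candidates H1 a b G - (G \<union> H2)"

section \<open>Bipartite graphs with a given degree sequence\<close>

locale bipartite_degrees =
  fixes U V :: "nat set" and d :: "nat \<Rightarrow> nat"
  assumes finite_U: "finite U" and finite_V: "finite V" and disjoint_UV: "U \<inter> V = {}"
begin

abbreviation "graphs \<equiv> bigraphs U V d"
abbreviation "cond \<equiv> cond_set U V d"
abbreviation "M \<equiv> Msum U d"
abbreviation "J \<equiv> Jd U V d"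
abbreviation "\<Delta> \<equiv> maxseq (U \<union> V) d"
abbreviation resdeg :: "(nat \<times> nat) set \<Rightarrow> nat \<Rightarrow> nat" where
  "resdeg H w \<equiv> d w - degG H w"

lemma finite_bipartite: "G \<subseteq> U \<times> V \<Longrightarrow> finite G"
  using finite_subset finite_U finite_V by blast

lemma graphs_subset: "G \<in> graphs \<Longrightarrow> G \<subseteq> U \<times> V"
  by (simp add: bigraphs_def)

lemma degG_graphs: "G \<in> graphs \<Longrightarrow> w \<in> U \<union> V \<Longrightarrow> degG G w = d w"
  by (simp add: bigraphs_def)

lemma finite_cond: "finite (cond H1 H2)"
proof -
  have "cond H1 H2 \<subseteq> Pow (U \<times> V)"
    by (auto simp: cond_set_def bigraphs_def)
  then show ?thesis
    using finite_U finite_V finite_subset by blast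
qed

lemma degG_left: "G \<subseteq> U \<times> V \<Longrightarrow> a \<in> U \<Longrightarrow> degG G a = card {y. (a, y) \<in> G}"
proof -
  assume G: "G \<subseteq> U \<times> V" and a: "a \<in> U"
  have no_right: "{e \<in> G. snd e = a} = {}"
    using G a disjoint_UV by auto
  have "bij_betw snd {e \<in> G. fst e = a} {y. (a, y) \<in> G}"
    by (auto simp: bij_betw_def inj_on_def image_def)
  then show ?thesis
    unfolding degG_def no_right by (simp add: bij_betw_same_card)
qed

lemma degG_right: "G \<subseteq> U \<times> V \<Longrightarrow> b \<in> V \<Longrightarrow> degG G b = card {x. (x, b) \<in> G}"
proof -
  assume G: "G \<subseteq> U \<times> V" and b: "b \<in> V"
  have no_left: "{e \<in> G. fst e = b} = {}"
    using G b disjoint_UV by auto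
  have "bij_betw fst {e \<in> G. snd e = b} {x. (x, b) \<in> G}"
    by (auto simp: bij_betw_def inj_on_def image_def)
  then show ?thesis
    unfolding degG_def no_left by (simp add: bij_betw_same_card)
qed

lemma maxseq_left_ge: "w \<in> U \<Longrightarrow> d w \<le> maxseq U d"
  using finite_U by (rule maxseq_ge)

lemma maxseq_right_ge: "w \<in> V \<Longrightarrow> d w \<le> maxseq V d"
  using finite_V by (rule maxseq_ge)

lemma Delta_ge: "w \<in> U \<union> V \<Longrightarrow> d w \<le> \<Delta>"
  using finite_U finite_V by (intro maxseq_ge) auto

lemma maxdeg_ge: "w \<in> U \<union> V \<Longrightarrow> degG H w \<le> maxdeg U V H"
  using finite_U finite_V by (simp add: maxdeg_def Max_ge_iff)

lemma card_nbrs_left: "G \<in> graphs \<Longrightarrow> a \<in> U \<Longrightarrow> card {y. (a, y) \<in> G} = d a"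
  using degG_left degG_graphs graphs_subset by fastforce

lemma card_nbrs_right: "G \<in> graphs \<Longrightarrow> b \<in> V \<Longrightarrow> card {x. (x, b) \<in> G} = d b"
  using degG_right degG_graphs graphs_subset by fastforce

lemma card_edges_to:
  assumes G: "G \<in> graphs" and Y: "Y \<subseteq> V"
  shows "card {e \<in> G. snd e \<in> Y} = sum d Y"
proof -
  have "finite G" "finite Y"
    using G Y finite_bipartite graphs_subset finite_V finite_subset by auto
  have "{e \<in> G. snd e \<in> Y} = (\<Union>y\<in>Y. {x. (x, y) \<in> G} \<times> {y})"
    by auto
  also have "card \<dots> = (\<Sum>y\<in>Y. card ({x. (x, y) \<in> G} \<times> {y}))"
    using \<open>finite Y\<close> \<open>finite G\<close>
    by (intro card_UN_disjoint) (auto intro: rev_finite_subset[OF \<open>finite G\<close>])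
  also have "\<dots> = sum d Y"
    using G Y by (intro sum.cong) (auto simp: card_cartesian_product card_nbrs_right)
  finally show ?thesis .
qed

lemma card_edges_from:
  assumes G: "G \<in> graphs" and X: "X \<subseteq> U"
  shows "card {e \<in> G. fst e \<in> X} = sum d X"
proof -
  have "finite G" "finite X"
    using G X finite_bipartite graphs_subset finite_U finite_subset by auto
  have "{e \<in> G. fst e \<in> X} = (\<Union>x\<in>X. {x} \<times> {y. (x, y) \<in> G})"
    by auto
  also have "card \<dots> = (\<Sum>x\<in>X. card ({x} \<times> {y. (x, y) \<in> G}))"
    using \<open>finite X\<close> \<open>finite G\<close>
    by (intro card_UN_disjoint) (auto intro: rev_finite_subset[OF \<open>finite G\<close>])
  also have "\<dots> = sum d X"
    using G X by (intro sum.cong) (auto simp: card_cartesian_product card_nbrs_left)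
  finally show ?thesis .
qed

lemma card_graphs: "G \<in> graphs \<Longrightarrow> card G = M"
proof -
  assume G: "G \<in> graphs"
  then have "{e \<in> G. fst e \<in> U} = G"
    using graphs_subset[OF G] by auto
  then show ?thesis
    using card_edges_from[OF G, of U] by (simp add: Msum_def)
qed

lemma sum_nbr_degrees_left_le_J:
  assumes G: "G \<in> graphs" and a: "a \<in> U"
  shows "(\<Sum>y\<in>{y. (a, y) \<in> G}. d y) \<le> J"
proof -
  have "{y. (a, y) \<in> G} \<subseteq> V" "card {y. (a, y) \<in> G} \<le> maxseq U d"
    using graphs_subset[OF G] card_nbrs_left[OF G a] maxseq_left_ge[OF a] by auto
  then have "(\<Sum>y\<in>{y. (a, y) \<in> G}. d y) \<le> sum_list (take (maxseq U d) (desc_seq V d))"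
    by (rule sum_le_sum_take_desc_seq[OF finite_V])
  then show ?thesis
    unfolding Jd_def by linarith
qed

lemma sum_nbr_degrees_right_le_J:
  assumes G: "G \<in> graphs" and b: "b \<in> V"
  shows "(\<Sum>x\<in>{x. (x, b) \<in> G}. d x) \<le> J"
proof -
  have "{x. (x, b) \<in> G} \<subseteq> U" "card {x. (x, b) \<in> G} \<le> maxseq V d"
    using graphs_subset[OF G] card_nbrs_right[OF G b] maxseq_right_ge[OF b] by auto
  then have "(\<Sum>x\<in>{x. (x, b) \<in> G}. d x) \<le> sum_list (take (maxseq V d) (desc_seq U d))"
    by (rule sum_le_sum_take_desc_seq[OF finite_U])
  then show ?thesis
    unfolding Jd_def by linarith
qed

lemma card_res_nbrs_left:
  assumes G: "G \<in> graphs" and H: "H \<subseteq> G" and a: "a \<in> U"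
  shows "card {y. (a, y) \<in> G - H} = resdeg H a"
proof -
  have "finite {y. (a, y) \<in> H}"
    using H G graphs_subset finite_V by (auto intro: rev_finite_subset[of V])
  moreover have "degG H a = card {y. (a, y) \<in> H}"
    using H G graphs_subset a by (intro degG_left) auto
  moreover have "{y. (a, y) \<in> G - H} = {y. (a, y) \<in> G} - {y. (a, y) \<in> H}"
    by auto
  ultimately show ?thesis
    using H card_nbrs_left[OF G a] by (simp add: card_Diff_subset subset_eq)
qed

lemma card_res_nbrs_right:
  assumes G: "G \<in> graphs" and H: "H \<subseteq> G" and b: "b \<in> V"
  shows "card {x. (x, b) \<in> G - H} = resdeg H b"
proof -
  have "finite {x. (x, b) \<in> H}"
    using H G graphs_subset finite_U by (auto intro: rev_finite_subset[of U])
  moreover have "degG H b = card {x. (x, b) \<in> H}"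
    using H G graphs_subset b by (intro degG_right) auto
  moreover have "{x. (x, b) \<in> G - H} = {x. (x, b) \<in> G} - {x. (x, b) \<in> H}"
    by auto
  ultimately show ?thesis
    using H card_nbrs_right[OF G b] by (simp add: card_Diff_subset subset_eq)
qed

lemma card_graph_diff:
  assumes G: "G \<in> graphs" and H: "H \<subseteq> G"
  shows "card (G - H) = M - card H" and "card H \<le> M"
proof -
  have "finite G"
    using G graphs_subset finite_bipartite by blast
  then have "finite H"
    using H finite_subset by blast
  show "card (G - H) = M - card H"
    using \<open>finite H\<close> H card_graphs[OF G] by (simp add: card_Diff_subset)
  show "card H \<le> M"
    using \<open>finite G\<close> H card_graphs[OF G] card_mono by fastforce
qed

lemma card_bwd_candidates:
  assumes "G \<in> graphs" "H1 \<subseteq> G" "a \<in> U" "b \<in> V"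
  shows "card (bwd_candidates H1 a b G) = resdeg H1 a * resdeg H1 b"
  unfolding bwd_candidates_def card_cartesian_product
    card_res_nbrs_left[OF assms(1-3)] card_res_nbrs_right[OF assms(1,2,4)]
  by (rule mult.commute)

lemma finite_bwd_candidates: "G \<in> graphs \<Longrightarrow> finite (bwd_candidates H1 a b G)"
proof -
  assume "G \<in> graphs"
  then have "bwd_candidates H1 a b G \<subseteq> U \<times> V"
    using graphs_subset by (auto simp: bwd_candidates_def)
  then show ?thesis
    by (rule finite_bipartite)
qed

lemma switch_graphs:
  assumes "G \<in> graphs" "(a, b) \<in> G" "(x, y) \<in> G" "(a, y) \<notin> G" "(x, b) \<notin> G"
  shows "switch a b x y G \<in> graphs"
proof -
  have "G \<subseteq> U \<times> V"
    using assms(1) by (rule graphs_subset)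
  then have "switch a b x y G \<subseteq> U \<times> V"
    using assms(2,3) by (auto simp: switch_def)
  moreover have "degG (switch a b x y G) w = degG G w" for w
    using assms(2-5) finite_bipartite[OF \<open>G \<subseteq> U \<times> V\<close>] by (intro degG_switch)
  ultimately show ?thesis
    using assms(1) by (simp add: bigraphs_def)
qed

section \<open>Counting switchings\<close>

lemma fwd_switch_mem:
  assumes G: "G \<in> cond H1 H2" and ab: "(a, b) \<in> G" "(a, b) \<notin> H1"
    and xy: "(x, y) \<in> fwd_switchings H1 H2 a b G"
  shows "switch a b x y G \<in> cond H1 (insert (a, b) H2)"
    and "(x, y) \<in> bwd_switchings H1 H2 a b (switch a b x y G)"
proof -
  have G': "G \<in> graphs" "H1 \<subseteq> G" "H2 \<inter> G = {}"
    using G by (auto simp: cond_set_def)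
  have xy': "(x, y) \<in> G" "(x, y) \<notin> H1" "(a, y) \<notin> G" "(a, y) \<notin> H2" "(x, b) \<notin> G" "(x, b) \<notin> H2"
    using xy by (auto simp: fwd_switchings_def)
  have "x \<noteq> a" "y \<noteq> b"
    using ab(1) xy'(1,3,5) by auto
  have "switch a b x y G \<in> graphs"
    using G'(1) ab(1) xy'(1,3,5) by (rule switch_graphs)
  moreover have "H1 \<subseteq> switch a b x y G"
    using G'(2) ab(2) xy'(2) by (auto simp: switch_def)
  moreover have "insert (a, b) H2 \<inter> switch a b x y G = {}"
    using G'(3) xy'(4,6) \<open>x \<noteq> a\<close> \<open>y \<noteq> b\<close> by (auto simp: switch_def)
  ultimately show "switch a b x y G \<in> cond H1 (insert (a, b) H2)"
    by (simp add: cond_set_def)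
  have "(x, y) \<notin> H2"
    using G'(3) xy'(1) by auto
  then show "(x, y) \<in> bwd_switchings H1 H2 a b (switch a b x y G)"
    using G'(2) xy'(3,5) \<open>x \<noteq> a\<close> \<open>y \<noteq> b\<close>
    by (auto simp: bwd_switchings_def bwd_candidates_def switch_def)
qed

lemma bwd_switch_mem:
  assumes G: "G \<in> cond H1 (insert (a, b) H2)" and ab: "(a, b) \<notin> H2"
    and xy: "(x, y) \<in> bwd_switchings H1 H2 a b G"
  shows "switch a y x b G \<in> cond H1 H2" and "(a, b) \<in> switch a y x b G"
    and "(x, y) \<in> fwd_switchings H1 H2 a b (switch a y x b G)"
proof -
  have G': "G \<in> graphs" "H1 \<subseteq> G" "H2 \<inter> G = {}" "(a, b) \<notin> G"
    using G by (auto simp: cond_set_def)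
  have xy': "(x, b) \<in> G" "(x, b) \<notin> H1" "(a, y) \<in> G" "(a, y) \<notin> H1" "(x, y) \<notin> G" "(x, y) \<notin> H2"
    using xy by (auto simp: bwd_switchings_def bwd_candidates_def)
  have "x \<noteq> a" "y \<noteq> b"
    using G'(4) xy'(1,3) by auto
  have "switch a y x b G \<in> graphs"
    using G'(1) xy'(3,1) G'(4) xy'(5) by (rule switch_graphs)
  moreover have "H1 \<subseteq> switch a y x b G"
    using G'(2) xy'(2,4) by (auto simp: switch_def)
  moreover have "H2 \<inter> switch a y x b G = {}"
    using G'(3) ab xy'(6) by (auto simp: switch_def)
  ultimately show "switch a y x b G \<in> cond H1 H2"
    by (simp add: cond_set_def)
  show "(a, b) \<in> switch a y x b G"
    by (simp add: switch_def)
  show "(x, y) \<in> fwd_switchings H1 H2 a b (switch a y x b G)"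
    using G'(2-4) xy'(1,3,5) \<open>x \<noteq> a\<close> \<open>y \<noteq> b\<close>
    by (auto simp: fwd_switchings_def switch_def)
qed

theorem switching_double_count:
  assumes "(a, b) \<notin> H1" "(a, b) \<notin> H2"
  shows "(\<Sum>G\<in>{G \<in> cond H1 H2. (a, b) \<in> G}. card (fwd_switchings H1 H2 a b G))
       = (\<Sum>G\<in>cond H1 (insert (a, b) H2). card (bwd_switchings H1 H2 a b G))"
proof -
  let ?A = "{G \<in> cond H1 H2. (a, b) \<in> G}" and ?B = "cond H1 (insert (a, b) H2)"
  let ?F = "Sigma ?A (fwd_switchings H1 H2 a b)" and ?R = "Sigma ?B (bwd_switchings H1 H2 a b)"
  let ?fwd = "\<lambda>(G, x, y). (switch a b x y G, x, y)" and ?bwd = "\<lambda>(G, x, y). (switch a y x b G, x, y)"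
  have "bij_betw ?fwd ?F ?R"
  proof (rule bij_betw_byWitness[where f' = ?bwd])
    show "\<forall>t\<in>?F. ?bwd (?fwd t) = t"
      by (auto simp: switch_switch fwd_switchings_def)
    show "\<forall>t\<in>?R. ?fwd (?bwd t) = t"
      by (auto simp: switch_switch bwd_switchings_def bwd_candidates_def cond_set_def)
    show "?fwd ` ?F \<subseteq> ?R"
      using assms(1) fwd_switch_mem by auto
    show "?bwd ` ?R \<subseteq> ?F"
      using assms(2) bwd_switch_mem by auto
  qed
  then have "card ?F = card ?R"
    by (rule bij_betw_same_card)
  moreover have "finite (fwd_switchings H1 H2 a b G)" if "G \<in> ?A" for G
    using that finite_bipartite
    by (auto simp: cond_set_def bigraphs_def fwd_switchings_def intro: rev_finite_subset)
  moreover have "finite (bwd_switchings H1 H2 a b G)" if "G \<in> ?B" for G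
    using that by (auto simp: cond_set_def bwd_switchings_def finite_bwd_candidates)
  ultimately show ?thesis
    using finite_cond by (simp add: card_SigmaI)
qed

lemma card_edges_to_le:
  assumes "G \<in> graphs" "Y \<subseteq> V"
  shows "card {e \<in> G. snd e \<in> Y} \<le> \<Delta> * card Y"
proof -
  have "sum d Y \<le> of_nat (card Y) * \<Delta>"
    by (rule sum_bounded_above) (use assms(2) Delta_ge in auto)
  then show ?thesis
    using card_edges_to[OF assms] by (simp add: mult.commute)
qed

lemma card_edges_from_le:
  assumes "G \<in> graphs" "X \<subseteq> U"
  shows "card {e \<in> G. fst e \<in> X} \<le> \<Delta> * card X"
proof -
  have "sum d X \<le> of_nat (card X) * \<Delta>"
    by (rule sum_bounded_above) (use assms(2) Delta_ge in auto)
  then show ?thesis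
    using card_edges_from[OF assms] by (simp add: mult.commute)
qed

lemma card_fwd_switchings_ge:
  assumes G: "G \<in> graphs" and H2: "H2 \<subseteq> U \<times> V" and a: "a \<in> U" and b: "b \<in> V"
  shows "card (G - H1) \<le> card (fwd_switchings H1 H2 a b G) + 2 * J + \<Delta> * (degG H2 a + degG H2 b)"
proof -
  let ?F = "fwd_switchings H1 H2 a b G"
  define B1 where "B1 = {e \<in> G. snd e \<in> {y. (a, y) \<in> G}}"
  define B2 where "B2 = {e \<in> G. fst e \<in> {x. (x, b) \<in> G}}"
  define B3 where "B3 = {e \<in> G. snd e \<in> {y. (a, y) \<in> H2}}"
  define B4 where "B4 = {e \<in> G. fst e \<in> {x. (x, b) \<in> H2}}"
  have "G \<subseteq> U \<times> V"
    using G by (rule graphs_subset)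
  have "card B1 \<le> J"
    unfolding B1_def using \<open>G \<subseteq> U \<times> V\<close>
    by (subst card_edges_to[OF G]) (auto intro: sum_nbr_degrees_left_le_J[OF G a])
  moreover have "card B2 \<le> J"
    unfolding B2_def using \<open>G \<subseteq> U \<times> V\<close>
    by (subst card_edges_from[OF G]) (auto intro: sum_nbr_degrees_right_le_J[OF G b])
  moreover have "card B3 \<le> \<Delta> * degG H2 a"
    unfolding B3_def degG_left[OF H2 a] using H2 by (intro card_edges_to_le[OF G]) auto
  moreover have "card B4 \<le> \<Delta> * degG H2 b"
    unfolding B4_def degG_right[OF H2 b] using H2 by (intro card_edges_from_le[OF G]) auto
  moreover have "?F \<union> B1 \<union> B2 \<union> B3 \<union> B4 \<subseteq> G"
    by (auto simp: fwd_switchings_def B1_def B2_def B3_def B4_def)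
  then have "card (G - H1) \<le> card (?F \<union> B1 \<union> B2 \<union> B3 \<union> B4)"
    using finite_bipartite[OF \<open>G \<subseteq> U \<times> V\<close>]
    by (intro card_mono) (auto simp: fwd_switchings_def B1_def B2_def B3_def B4_def intro: finite_subset)
  moreover have "card (?F \<union> B1 \<union> B2 \<union> B3 \<union> B4) \<le> card ?F + card B1 + card B2 + card B3 + card B4"
    by (intro order_trans[OF card_Un_le] add_mono order_refl)
  ultimately show ?thesis
    by (simp add: algebra_simps)
qed

lemma card_bwd_switchings_le:
  assumes "G \<in> graphs" "H1 \<subseteq> G" "a \<in> U" "b \<in> V"
  shows "card (bwd_switchings H1 H2 a b G) \<le> resdeg H1 a * resdeg H1 b"
  unfolding bwd_switchings_def card_bwd_candidates[OF assms, symmetric]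
  using finite_bwd_candidates[OF assms(1)] by (rule card_mono) blast

theorem card_with_edge_le:
  assumes H2: "H2 \<subseteq> U \<times> V" and a: "a \<in> U" and b: "b \<in> V" and ab: "(a, b) \<notin> H1"
  shows "real (card {G \<in> cond H1 H2. (a, b) \<in> G})
           * (real M - card H1 - 2 * J - \<Delta> * (degG H2 a + degG H2 b))
         \<le> real (card (cond H1 H2)) * (resdeg H1 a * resdeg H1 b)"
proof (cases "(a, b) \<in> H2")
  case True
  then have "{G \<in> cond H1 H2. (a, b) \<in> G} = {}"
    by (auto simp: cond_set_def)
  then show ?thesis
    by (simp only: card.empty) simp
next
  case False
  let ?A = "{G \<in> cond H1 H2. (a, b) \<in> G}" and ?B = "cond H1 (insert (a, b) H2)"
  have "real M - card H1 - 2 * J - \<Delta> * (degG H2 a + degG H2 b) \<le> card (fwd_switchings H1 H2 a b G)"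
    if "G \<in> ?A" for G
  proof -
    have "G \<in> graphs" "H1 \<subseteq> G"
      using that by (auto simp: cond_set_def)
    then have "M - card H1 \<le> card (fwd_switchings H1 H2 a b G) + 2 * J + \<Delta> * (degG H2 a + degG H2 b)"
      and "card H1 \<le> M"
      using card_fwd_switchings_ge[OF _ H2 a b, of G H1] card_graph_diff[of G H1] by auto
    then have "real (M - card H1)
        \<le> real (card (fwd_switchings H1 H2 a b G) + 2 * J + \<Delta> * (degG H2 a + degG H2 b))"
      by (simp only: of_nat_le_iff)
    then show ?thesis
      unfolding of_nat_diff[OF \<open>card H1 \<le> M\<close>] by simp
  qed
  then have "real (card ?A) * (real M - card H1 - 2 * J - \<Delta> * (degG H2 a + degG H2 b))
      \<le> (\<Sum>G\<in>?A. real (card (fwd_switchings H1 H2 a b G)))"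
    by (rule sum_bounded_below)
  also have "\<dots> = (\<Sum>G\<in>?B. real (card (bwd_switchings H1 H2 a b G)))"
    using switching_double_count[OF ab False] by (simp flip: of_nat_sum)
  also have "\<dots> \<le> real (card ?B) * (resdeg H1 a * resdeg H1 b)"
    using card_bwd_switchings_le[OF _ _ a b]
    by (intro sum_bounded_above) (auto simp: cond_set_def simp flip: of_nat_mult)
  also have "\<dots> \<le> real (card (cond H1 H2)) * (resdeg H1 a * resdeg H1 b)"
    using finite_cond by (intro mult_right_mono) (auto simp: cond_set_def intro: card_mono)
  finally show ?thesis .
qed

lemma card_fwd_switchings_le:
  assumes "G \<in> graphs" "H1 \<subseteq> G"
  shows "card (fwd_switchings H1 H2 a b G) \<le> M - card H1"
proof -
  have "finite (G - H1)"
    using assms(1) finite_bipartite graphs_subset by blast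
  then have "card (fwd_switchings H1 H2 a b G) \<le> card (G - H1)"
    by (rule card_mono) (auto simp: fwd_switchings_def)
  then show ?thesis
    using card_graph_diff[OF assms] by simp
qed

lemma card_bwd_candidates_le:
  assumes "G \<in> graphs"
  shows "card (bwd_candidates H1 a b G)
    \<le> card (bwd_switchings H1 H2 a b G) + card (bwd_candidates H1 a b G \<inter> G)
      + card (bwd_candidates H1 a b G \<inter> H2)"
proof -
  let ?C = "bwd_candidates H1 a b G"
  have "card ?C \<le> card (bwd_switchings H1 H2 a b G \<union> (?C \<inter> G) \<union> (?C \<inter> H2))"
    using finite_bwd_candidates[OF assms] by (intro card_mono) (auto simp: bwd_switchings_def)
  also have "\<dots> \<le> card (bwd_switchings H1 H2 a b G) + card (?C \<inter> G) + card (?C \<inter> H2)"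
    by (intro order_trans[OF card_Un_le] add_mono order_refl)
  finally show ?thesis .
qed

theorem card_without_edge_le:
  assumes a: "a \<in> U" and b: "b \<in> V" and ab: "(a, b) \<notin> H1" "(a, b) \<notin> H2"
  shows "card (cond H1 (insert (a, b) H2)) * (resdeg H1 a * resdeg H1 b)
    \<le> card {G \<in> cond H1 H2. (a, b) \<in> G} * (M - card H1)
      + (\<Sum>G\<in>cond H1 (insert (a, b) H2). card (bwd_candidates H1 a b G \<inter> G))
      + (\<Sum>G\<in>cond H1 (insert (a, b) H2). card (bwd_candidates H1 a b G \<inter> H2))"
proof -
  let ?A = "{G \<in> cond H1 H2. (a, b) \<in> G}" and ?B = "cond H1 (insert (a, b) H2)"
  let ?C = "bwd_candidates H1 a b"
  have fwd_le: "(\<Sum>G\<in>?A. card (fwd_switchings H1 H2 a b G)) \<le> of_nat (card ?A) * (M - card H1)"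
    using card_fwd_switchings_le by (intro sum_bounded_above) (simp add: cond_set_def)
  have "card ?B * (resdeg H1 a * resdeg H1 b) = (\<Sum>G\<in>?B. card (?C G))"
    using card_bwd_candidates[OF _ _ a b] by (simp add: cond_set_def)
  also have "\<dots> \<le> (\<Sum>G\<in>?B. card (bwd_switchings H1 H2 a b G) + card (?C G \<inter> G) + card (?C G \<inter> H2))"
    using card_bwd_candidates_le by (intro sum_mono) (simp add: cond_set_def)
  also have "\<dots> = (\<Sum>G\<in>?A. card (fwd_switchings H1 H2 a b G))
      + (\<Sum>G\<in>?B. card (?C G \<inter> G)) + (\<Sum>G\<in>?B. card (?C G \<inter> H2))"
    by (simp add: sum.distrib switching_double_count[OF ab])
  finally show ?thesis
    using fwd_le by simp
qed

lemma sum_nbr_degrees_of_res_nbrs_le: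
  assumes G: "G \<in> graphs" and H: "H \<subseteq> G" and b: "b \<in> V"
  shows "(\<Sum>p\<in>{p \<in> U \<times> V. (fst p, b) \<in> G - H \<and> p \<in> G}. d (snd p)) \<le> resdeg H b * J"
proof -
  let ?X = "{x. (x, b) \<in> G - H}"
  have "G \<subseteq> U \<times> V"
    using G by (rule graphs_subset)
  then have "{p \<in> U \<times> V. (fst p, b) \<in> G - H \<and> p \<in> G} = Sigma ?X (\<lambda>x. {y. (x, y) \<in> G})"
    by auto
  moreover have "finite ?X" "finite {y. (x, y) \<in> G}" for x
    using \<open>G \<subseteq> U \<times> V\<close> finite_U finite_V by (auto intro: rev_finite_subset)
  ultimately have "(\<Sum>p\<in>{p \<in> U \<times> V. (fst p, b) \<in> G - H \<and> p \<in> G}. d (snd p))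
      = (\<Sum>x\<in>?X. \<Sum>y\<in>{y. (x, y) \<in> G}. d y)"
    by (simp add: sum.Sigma split_def)
  also have "\<dots> \<le> of_nat (card ?X) * J"
    using \<open>G \<subseteq> U \<times> V\<close> sum_nbr_degrees_left_le_J[OF G] by (intro sum_bounded_above) auto
  finally show ?thesis
    using card_res_nbrs_right[OF G H b] by simp
qed

text \<open>
  \<open>L\<close> is a common lower bound for the factor \<open>M - e(H1') - 2J - \<Delta>(d_p^H2' + d_q^H2')\<close>
  in \<open>card_with_edge_le\<close> over all \<open>H1'\<close> forcing at most two edges more than \<open>H1\<close> and
  \<open>H2' = H2 + ab\<close>, so that the upper bound can be reused to count lost backward candidates.
\<close>
context
  fixes H1 H2 :: "(nat \<times> nat) set" and a b :: nat and L :: real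
  assumes H1: "H1 \<subseteq> U \<times> V" and H2: "H2 \<subseteq> U \<times> V" and a: "a \<in> U" and b: "b \<in> V"
    and L_nonneg: "0 \<le> L"
    and L_le: "L \<le> real M - card H1 - 2 - 2 * J - 2 * \<Delta> * (maxdeg U V H2 + 1)"
begin

lemma card_with_edge_le_extended:
  assumes H1': "H1 \<subseteq> H1'" "finite H1'" "card H1' \<le> card H1 + 2"
    and p: "p \<in> U" and q: "q \<in> V" and pq: "(p, q) \<notin> H1'"
  shows "real (card {G \<in> cond H1' (insert (a, b) H2). (p, q) \<in> G}) * L
    \<le> real (card (cond H1' (insert (a, b) H2))) * (resdeg H1 p * resdeg H1 q)"
proof -
  let ?H2 = "insert (a, b) H2"
  have "a \<noteq> b"
    using a b disjoint_UV by auto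
  then have "degG ?H2 w \<le> maxdeg U V H2 + 1" if "w \<in> U \<union> V" for w
    using degG_insert_le[OF finite_bipartite[OF H2], of "(a, b)" w] maxdeg_ge[OF that, of H2] by auto
  then have "degG ?H2 p + degG ?H2 q \<le> 2 * (maxdeg U V H2 + 1)"
    using p q by (metis UnI1 UnI2 add_mono mult_2)
  then have "\<Delta> * (degG ?H2 p + degG ?H2 q) \<le> 2 * \<Delta> * (maxdeg U V H2 + 1)"
    by (metis mult.assoc mult.left_commute mult_le_mono2)
  then have "real (\<Delta> * (degG ?H2 p + degG ?H2 q)) \<le> real (2 * \<Delta> * (maxdeg U V H2 + 1))"
    by (rule of_nat_mono)
  moreover have "real (card H1') \<le> real (card H1) + 2"
    using H1'(3) by simp
  ultimately have "L \<le> real M - card H1' - 2 * J - \<Delta> * (degG ?H2 p + degG ?H2 q)"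
    using L_le by linarith
  then have "real (card {G \<in> cond H1' ?H2. (p, q) \<in> G}) * L
      \<le> real (card {G \<in> cond H1' ?H2. (p, q) \<in> G}) * (real M - card H1' - 2 * J - \<Delta> * (degG ?H2 p + degG ?H2 q))"
    by (rule mult_left_mono) simp
  also have "\<dots> \<le> real (card (cond H1' ?H2)) * (resdeg H1' p * resdeg H1' q)"
    using H2 a b by (intro card_with_edge_le p q pq) auto
  also have "\<dots> \<le> real (card (cond H1' ?H2)) * (resdeg H1 p * resdeg H1 q)"
    using degG_mono[OF H1'(2,1)] by (intro mult_left_mono) (auto intro!: mult_mono diff_le_mono2 simp del: of_nat_mult)
  finally show ?thesis .
qed

lemma card_cand_in_graph_le:
  assumes x: "x \<in> U" and y: "y \<in> V"
  shows "real (card {G \<in> cond H1 (insert (a, b) H2). (x, y) \<in> bwd_candidates H1 a b G \<inter> G}) * L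
    \<le> real (card {G \<in> cond H1 (insert (a, b) H2). (x, b) \<in> G - H1 \<and> (x, y) \<in> G}) * (resdeg H1 a * d y)"
proof (cases "(x, b) \<in> H1 \<or> (a, y) \<in> H1 \<or> x = a")
  case True
  then have "{G \<in> cond H1 (insert (a, b) H2). (x, y) \<in> bwd_candidates H1 a b G \<inter> G} = {}"
    by (auto simp: cond_set_def bwd_candidates_def)
  then show ?thesis
    by (simp only: card.empty) simp
next
  case False
  let ?H1 = "insert (x, b) (insert (x, y) H1)" and ?H2 = "insert (a, b) H2"
  have "finite ?H1" "card ?H1 \<le> card H1 + 2"
    using finite_bipartite[OF H1] by (auto simp: card_insert_if)
  then have "real (card {G \<in> cond ?H1 ?H2. (a, y) \<in> G}) * L
      \<le> real (card (cond ?H1 ?H2)) * (resdeg H1 a * resdeg H1 y)"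
    using False by (intro card_with_edge_le_extended a y) auto
  moreover have "{G \<in> cond ?H1 ?H2. (a, y) \<in> G} = {G \<in> cond H1 ?H2. (x, y) \<in> bwd_candidates H1 a b G \<inter> G}"
    and "cond ?H1 ?H2 = {G \<in> cond H1 ?H2. (x, b) \<in> G - H1 \<and> (x, y) \<in> G}"
    using False by (auto simp: cond_set_def bwd_candidates_def)
  ultimately have "real (card {G \<in> cond H1 ?H2. (x, y) \<in> bwd_candidates H1 a b G \<inter> G}) * L
      \<le> real (card {G \<in> cond H1 ?H2. (x, b) \<in> G - H1 \<and> (x, y) \<in> G}) * (resdeg H1 a * resdeg H1 y)"
    by (simp only:)
  also have "\<dots> \<le> real (card {G \<in> cond H1 ?H2. (x, b) \<in> G - H1 \<and> (x, y) \<in> G}) * (resdeg H1 a * d y)"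
    by (auto intro!: mult_mono simp del: of_nat_mult)
  finally show ?thesis .
qed

lemma card_cand_in_H2_le:
  assumes xy: "(x, y) \<in> H2"
  shows "real (card {G \<in> cond H1 (insert (a, b) H2). (x, y) \<in> bwd_candidates H1 a b G}) * L\<^sup>2
    \<le> real (card (cond H1 (insert (a, b) H2))) * (maxseq U d * resdeg H1 b) * (resdeg H1 a * maxseq V d)"
proof (cases "(x, b) \<in> H1 \<or> (a, y) \<in> H1 \<or> x = a")
  case True
  then have "{G \<in> cond H1 (insert (a, b) H2). (x, y) \<in> bwd_candidates H1 a b G} = {}"
    by (auto simp: cond_set_def bwd_candidates_def)
  then show ?thesis
    by (simp only: card.empty) simp
next
  case False
  let ?H2 = "insert (a, b) H2"
  let ?Bxb = "{G \<in> cond H1 ?H2. (x, b) \<in> G}"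
  have x: "x \<in> U" and y: "y \<in> V"
    using xy H2 by auto
  have "real (card ?Bxb) * L \<le> real (card (cond H1 ?H2)) * (resdeg H1 x * resdeg H1 b)"
    using False finite_bipartite[OF H1] by (intro card_with_edge_le_extended x b) auto
  also have "\<dots> \<le> real (card (cond H1 ?H2)) * (maxseq U d * resdeg H1 b)"
    using maxseq_left_ge[OF x] by (auto intro!: mult_mono simp del: of_nat_mult)
  finally have step_xb: "real (card ?Bxb) * L \<le> real (card (cond H1 ?H2)) * (maxseq U d * resdeg H1 b)" .
  have "finite (insert (x, b) H1)" "card (insert (x, b) H1) \<le> card H1 + 2"
    using finite_bipartite[OF H1] by (auto simp: card_insert_if)
  then have "real (card {G \<in> cond (insert (x, b) H1) ?H2. (a, y) \<in> G}) * L
      \<le> real (card (cond (insert (x, b) H1) ?H2)) * (resdeg H1 a * resdeg H1 y)"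
    using False by (intro card_with_edge_le_extended a y) auto
  moreover have "{G \<in> cond (insert (x, b) H1) ?H2. (a, y) \<in> G} = {G \<in> cond H1 ?H2. (x, y) \<in> bwd_candidates H1 a b G}"
    and "cond (insert (x, b) H1) ?H2 = ?Bxb"
    using False by (auto simp: cond_set_def bwd_candidates_def)
  ultimately have "real (card {G \<in> cond H1 ?H2. (x, y) \<in> bwd_candidates H1 a b G}) * L
      \<le> real (card ?Bxb) * (resdeg H1 a * resdeg H1 y)"
    by (simp only:)
  also have "\<dots> \<le> real (card ?Bxb) * (resdeg H1 a * maxseq V d)"
    using maxseq_right_ge[OF y] by (auto intro!: mult_mono simp del: of_nat_mult)
  finally have step_ay: "real (card {G \<in> cond H1 ?H2. (x, y) \<in> bwd_candidates H1 a b G}) * L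
      \<le> real (card ?Bxb) * (resdeg H1 a * maxseq V d)" .
  have "real (card {G \<in> cond H1 ?H2. (x, y) \<in> bwd_candidates H1 a b G}) * L\<^sup>2
      \<le> real (card ?Bxb) * L * (resdeg H1 a * maxseq V d)"
    using mult_right_mono[OF step_ay L_nonneg] by (simp add: power2_eq_square algebra_simps)
  also have "\<dots> \<le> real (card (cond H1 ?H2)) * (maxseq U d * resdeg H1 b) * (resdeg H1 a * maxseq V d)"
    using step_xb by (rule mult_right_mono) simp
  finally show ?thesis .
qed

lemma sum_card_cand_in_graph_le:
  "(\<Sum>G\<in>cond H1 (insert (a, b) H2). real (card (bwd_candidates H1 a b G \<inter> G))) * L
    \<le> real (card (cond H1 (insert (a, b) H2))) * (resdeg H1 a * resdeg H1 b * J)"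
proof -
  let ?B = "cond H1 (insert (a, b) H2)" and ?C = "bwd_candidates H1 a b"
  let ?N = "\<lambda>G p. (fst p, b) \<in> G - H1 \<and> p \<in> G"
  have fin: "finite ?B" "finite (U \<times> V)"
    using finite_cond finite_U finite_V by auto
  have "?C G \<inter> G = {p \<in> U \<times> V. p \<in> ?C G \<inter> G}" if "G \<in> ?B" for G
    using that by (auto simp: cond_set_def bigraphs_def)
  then have "(\<Sum>G\<in>?B. real (card (?C G \<inter> G))) = (\<Sum>G\<in>?B. \<Sum>p\<in>{p \<in> U \<times> V. p \<in> ?C G \<inter> G}. 1)"
    by (intro sum.cong) auto
  also have "\<dots> = (\<Sum>p\<in>U \<times> V. real (card {G \<in> ?B. p \<in> ?C G \<inter> G}))"
    using sum_card_filter_swap[OF fin, where Q = "\<lambda>G p. p \<in> ?C G \<inter> G" and g = "\<lambda>_. 1 :: real"] by simp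
  finally have "(\<Sum>G\<in>?B. real (card (?C G \<inter> G))) * L
      = (\<Sum>p\<in>U \<times> V. real (card {G \<in> ?B. p \<in> ?C G \<inter> G}) * L)"
    by (simp add: sum_distrib_right)
  also have "\<dots> \<le> (\<Sum>p\<in>U \<times> V. real (card {G \<in> ?B. ?N G p}) * (resdeg H1 a * d (snd p)))"
    using card_cand_in_graph_le by (intro sum_mono) auto
  also have "\<dots> = resdeg H1 a * (\<Sum>G\<in>?B. \<Sum>p\<in>{p \<in> U \<times> V. ?N G p}. real (d (snd p)))"
    unfolding sum_card_filter_swap[OF fin, where Q = ?N and g = "\<lambda>p. real (d (snd p))"]
    by (simp add: sum_distrib_left mult_ac)
  also have "\<dots> \<le> resdeg H1 a * (\<Sum>G\<in>?B. real (resdeg H1 b * J))"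
    using sum_nbr_degrees_of_res_nbrs_le[OF _ _ b]
    by (intro mult_left_mono sum_mono) (auto simp: cond_set_def simp flip: of_nat_sum of_nat_mult)
  finally show ?thesis
    by (simp add: mult_ac)
qed

lemma sum_card_cand_in_H2_le:
  "(\<Sum>G\<in>cond H1 (insert (a, b) H2). real (card (bwd_candidates H1 a b G \<inter> H2))) * L\<^sup>2
    \<le> real (card H2) * real (card (cond H1 (insert (a, b) H2)))
        * (maxseq U d * resdeg H1 b) * (resdeg H1 a * maxseq V d)"
proof -
  let ?B = "cond H1 (insert (a, b) H2)" and ?C = "bwd_candidates H1 a b"
  have fin: "finite ?B" "finite H2"
    using finite_cond finite_bipartite[OF H2] by auto
  have "(\<Sum>G\<in>?B. real (card (?C G \<inter> H2))) = (\<Sum>G\<in>?B. \<Sum>p\<in>{p \<in> H2. p \<in> ?C G}. 1)"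
    by (intro sum.cong) (auto simp: Int_def conj_commute)
  also have "\<dots> = (\<Sum>p\<in>H2. real (card {G \<in> ?B. p \<in> ?C G}))"
    using sum_card_filter_swap[OF fin, where Q = "\<lambda>G p. p \<in> ?C G" and g = "\<lambda>_. 1 :: real"] by simp
  finally have "(\<Sum>G\<in>?B. real (card (?C G \<inter> H2))) * L\<^sup>2
      = (\<Sum>p\<in>H2. real (card {G \<in> ?B. p \<in> ?C G}) * L\<^sup>2)"
    by (simp add: sum_distrib_right)
  also have "\<dots> \<le> of_nat (card H2) * (real (card ?B) * (maxseq U d * resdeg H1 b) * (resdeg H1 a * maxseq V d))"
    using card_cand_in_H2_le by (intro sum_bounded_above) auto
  finally show ?thesis
    by (simp add: mult_ac)
qed

theorem card_without_edge_le_refined: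
  assumes ab: "(a, b) \<notin> H1" "(a, b) \<notin> H2"
  shows "real (card (cond H1 (insert (a, b) H2))) * (resdeg H1 a * resdeg H1 b) * L\<^sup>2
    \<le> real (card {G \<in> cond H1 H2. (a, b) \<in> G}) * (real M - card H1) * L\<^sup>2
      + real (card (cond H1 (insert (a, b) H2))) * (resdeg H1 a * resdeg H1 b)
          * (J * L + card H2 * maxseq U d * maxseq V d)"
proof -
  let ?A = "{G \<in> cond H1 H2. (a, b) \<in> G}" and ?B = "cond H1 (insert (a, b) H2)"
  let ?C = "bwd_candidates H1 a b"
  have "card H1 \<le> M"
    using L_nonneg L_le by linarith
  have "real (card ?B) * (resdeg H1 a * resdeg H1 b)
      \<le> real (card ?A) * (real M - card H1)
        + (\<Sum>G\<in>?B. real (card (?C G \<inter> G))) + (\<Sum>G\<in>?B. real (card (?C G \<inter> H2)))"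
    using card_without_edge_le[OF a b ab, THEN of_nat_mono[where 'a=real]]
    by (simp add: of_nat_diff[OF \<open>card H1 \<le> M\<close>])
  moreover have "X * L\<^sup>2 \<le> P * L\<^sup>2 + T1 * L + T2"
    if "X \<le> P + S1 + S2" "S1 * L \<le> T1" "S2 * L\<^sup>2 \<le> T2" for X P S1 S2 T1 T2 :: real
  proof -
    have "X * L\<^sup>2 \<le> (P + S1 + S2) * L\<^sup>2"
      using that(1) by (rule mult_right_mono) simp
    also have "\<dots> = P * L\<^sup>2 + (S1 * L) * L + S2 * L\<^sup>2"
      by (simp add: algebra_simps power2_eq_square)
    also have "\<dots> \<le> P * L\<^sup>2 + T1 * L + T2"
      using that(2,3) L_nonneg by (intro add_mono mult_right_mono) auto
    finally show ?thesis .
  qed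
  ultimately have "real (card ?B) * (resdeg H1 a * resdeg H1 b) * L\<^sup>2
      \<le> real (card ?A) * (real M - card H1) * L\<^sup>2
        + real (card ?B) * (resdeg H1 a * resdeg H1 b * J) * L
        + real (card H2) * real (card ?B) * (maxseq U d * resdeg H1 b) * (resdeg H1 a * maxseq V d)"
    using sum_card_cand_in_graph_le sum_card_cand_in_H2_le by blast
  then show ?thesis
    by (simp add: ring_distribs mult_ac)
qed

end

section \<open>The conditional edge probability\<close>

lemma card_cond_split:
  "card (cond H1 H2) = card {G \<in> cond H1 H2. e \<in> G} + card (cond H1 (insert e H2))"
proof -
  have "cond H1 H2 = {G \<in> cond H1 H2. e \<in> G} \<union> cond H1 (insert e H2)"
    and "{G \<in> cond H1 H2. e \<in> G} \<inter> cond H1 (insert e H2) = {}"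
    by (auto simp: cond_set_def)
  then show ?thesis
    using finite_cond by (metis card_Un_disjoint finite_Un)
qed

lemma cond_prob_upper:
  assumes H2: "H2 \<subseteq> U \<times> V" and u: "u \<in> U" and v: "v \<in> V" and uv: "(u, v) \<notin> H1"
    and H1_lt: "card H1 < M" and nonempty: "cond H1 H2 \<noteq> {}"
  shows "cond_prob U V d H1 H2 (u, v)
      * (1 - 2 * J / (real M - card H1) - 2 * \<Delta> * (1 + maxdeg U V H2) / (real M - card H1))
    \<le> resdeg H1 u * resdeg H1 v / (real M - card H1)"
proof -
  define R where "R = real M - card H1"
  define p where "p = real (card {G \<in> cond H1 H2. (u, v) \<in> G})"
  define s where "s = real (card (cond H1 H2))"
  have "R > 0" "s > 0"
    using H1_lt nonempty finite_cond by (auto simp: R_def s_def card_gt_0_iff)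
  have "degG H2 u + degG H2 v \<le> 2 * (1 + maxdeg U V H2)"
    using maxdeg_ge[of u H2] maxdeg_ge[of v H2] u v by auto
  then have "real (\<Delta> * (degG H2 u + degG H2 v)) \<le> real (\<Delta> * (2 * (1 + maxdeg U V H2)))"
    by (intro of_nat_mono mult_left_mono) auto
  then have "p * (R - 2 * J - 2 * \<Delta> * (1 + maxdeg U V H2)) \<le> p * (R - 2 * J - \<Delta> * (degG H2 u + degG H2 v))"
    by (intro mult_left_mono) (auto simp: p_def)
  also have "\<dots> \<le> s * (resdeg H1 u * resdeg H1 v)"
    unfolding p_def s_def R_def using card_with_edge_le[OF H2 u v uv] by simp
  finally have "p * (R - 2 * J - 2 * \<Delta> * (1 + maxdeg U V H2)) / (s * R)
      \<le> s * (resdeg H1 u * resdeg H1 v) / (s * R)"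
    using \<open>R > 0\<close> \<open>s > 0\<close> by (intro divide_right_mono) auto
  moreover have "p * (R - 2 * J - 2 * \<Delta> * (1 + maxdeg U V H2)) / (s * R)
      = p / s * (1 - 2 * J / R - 2 * \<Delta> * (1 + maxdeg U V H2) / R)"
    using \<open>R > 0\<close> \<open>s > 0\<close> by (simp add: field_simps)
  ultimately show ?thesis
    using \<open>s > 0\<close> by (simp add: cond_prob_def p_def s_def R_def)
qed

lemma card_without_edge_le_of_large:
  assumes H1: "H1 \<subseteq> U \<times> V" and H2: "H2 \<subseteq> U \<times> V" and u: "u \<in> U" and v: "v \<in> V"
    and uv: "(u, v) \<notin> H1" "(u, v) \<notin> H2"
    and large: "4 * (1 + J + \<Delta> * (1 + maxdeg U V H2)) \<le> real M - card H1"
  shows "real (card (cond H1 (insert (u, v) H2))) * (resdeg H1 u * resdeg H1 v) * (real M - card H1)\<^sup>2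
    \<le> real (card {G \<in> cond H1 H2. (u, v) \<in> G}) * (real M - card H1) ^ 3
      + real (card (cond H1 (insert (u, v) H2))) * (resdeg H1 u * resdeg H1 v)
          * (2 * J * (real M - card H1) + 4 * (card H2 * maxseq U d * maxseq V d))"
proof -
  define R where "R = real M - card H1"
  have large': "4 + 4 * real J + 4 * real \<Delta> + 4 * (real \<Delta> * real (maxdeg U V H2)) \<le> R"
    using large unfolding R_def by (simp add: algebra_simps)
  moreover have "0 \<le> real \<Delta> * real (maxdeg U V H2)" "0 \<le> real J" "0 \<le> real \<Delta>"
    by simp_all
  ultimately have "0 \<le> R / 2"
    and "R / 2 \<le> R - 2 - 2 * real J - 2 * (real \<Delta> * real (maxdeg U V H2)) - 2 * real \<Delta>"
    by linarith+
  then have "0 \<le> R / 2" "R / 2 \<le> real M - card H1 - 2 - 2 * J - 2 * \<Delta> * (maxdeg U V H2 + 1)"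
    by (simp_all add: R_def algebra_simps)
  from card_without_edge_le_refined[OF H1 H2 u v this uv]
  show ?thesis
    unfolding R_def[symmetric] by (simp add: power2_eq_square power3_eq_cube field_simps)
qed

lemma cond_prob_lower:
  assumes H1: "H1 \<subseteq> U \<times> V" and H2: "H2 \<subseteq> U \<times> V" and u: "u \<in> U" and v: "v \<in> V"
    and uv: "(u, v) \<notin> H1" "(u, v) \<notin> H2" and H1_lt: "card H1 < M" and nonempty: "cond H1 H2 \<noteq> {}"
    and large: "4 * (1 + J + \<Delta> * (1 + maxdeg U V H2)) \<le> real M - card H1"
  shows "(1 - cond_prob U V d H1 H2 (u, v)) * (resdeg H1 u * resdeg H1 v / (real M - card H1))
      * (1 - 2 * J / (real M - card H1) - 4 * (card H2 * maxseq U d * maxseq V d) / (real M - card H1)\<^sup>2)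
    \<le> cond_prob U V d H1 H2 (u, v)"
proof -
  define R where "R = real M - card H1"
  define p where "p = real (card {G \<in> cond H1 H2. (u, v) \<in> G})"
  define q where "q = real (card (cond H1 (insert (u, v) H2)))"
  define rr where "rr = real (resdeg H1 u) * real (resdeg H1 v)"
  define E where "E = real (card H2 * maxseq U d * maxseq V d)"
  have "R > 0"
    using H1_lt by (simp add: R_def)
  define S where "S = real (card (cond H1 H2))"
  have "S = p + q"
    by (simp add: S_def p_def q_def card_cond_split[of H1 H2 "(u, v)"])
  have "S > 0"
    using nonempty finite_cond by (simp add: S_def card_gt_0_iff)
  have "q * rr * R\<^sup>2 \<le> p * R ^ 3 + q * rr * (2 * J * R + 4 * E)"
    using card_without_edge_le_of_large[OF H1 H2 u v uv large]
    by (simp add: p_def q_def rr_def E_def R_def mult.assoc)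
  then have "q * rr * (R\<^sup>2 - 2 * J * R - 4 * E) \<le> p * R ^ 3"
    by (simp add: algebra_simps)
  then have "q * rr * (R\<^sup>2 - 2 * J * R - 4 * E) / (S * R ^ 3) \<le> p * R ^ 3 / (S * R ^ 3)"
    by (rule divide_right_mono) (use \<open>R > 0\<close> \<open>S > 0\<close> in simp)
  moreover have "q * rr * (R\<^sup>2 - 2 * J * R - 4 * E) / (S * R ^ 3) = q / S * (rr / R) * (1 - 2 * J / R - 4 * E / R\<^sup>2)"
    and "p * R ^ 3 / (S * R ^ 3) = p / S"
    using \<open>R > 0\<close> \<open>S > 0\<close> by (simp_all add: field_simps power2_eq_square power3_eq_cube)
  moreover have "q / S = 1 - p / S"
    using \<open>S = p + q\<close> \<open>S > 0\<close> by (simp add: field_simps)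
  moreover have "cond_prob U V d H1 H2 (u, v) = p / S"
    by (simp add: cond_prob_def S_def p_def)
  ultimately show ?thesis
    by (simp add: rr_def E_def R_def)
qed

lemma xi_eq:
  assumes deg_H1: "\<forall>w \<in> U \<union> V. degG H1 w \<le> d w" and u: "u \<in> U" and v: "v \<in> V"
  shows "xi U V d H1 H2 u v = J / (real M - card H1) + \<Delta> * (1 + maxdeg U V H2) / (real M - card H1)
      + resdeg H1 u * resdeg H1 v / (real M - card H1)
      + card H2 * maxseq U d * maxseq V d / (real M - card H1)\<^sup>2"
  using deg_H1 u v by (simp add: xi_def of_nat_diff add_divide_distrib distrib_left)

lemma large_of_xi_le:
  assumes deg_H1: "\<forall>w \<in> U \<union> V. degG H1 w \<le> d w" and u: "u \<in> U" and v: "v \<in> V"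
    and H1_lt: "card H1 < M" and res_u: "0 < resdeg H1 u" and small: "xi U V d H1 H2 u v \<le> 1/16"
  shows "4 * (1 + J + \<Delta> * (1 + maxdeg U V H2)) \<le> real M - card H1"
proof -
  define R where "R = real M - card H1"
  define K where "K = real \<Delta> * (1 + real (maxdeg U V H2))"
  have "R > 0"
    using H1_lt by (simp add: R_def)
  have "1 \<le> real \<Delta>"
    using res_u Delta_ge[of u] u by simp
  then have "1 \<le> K"
    unfolding K_def by (simp add: distrib_left add_increasing2)
  define X where "X = real (resdeg H1 u) * real (resdeg H1 v) / R + real (card H2 * maxseq U d * maxseq V d) / R\<^sup>2"
  have "xi U V d H1 H2 u v = J / R + K / R + X"
    using xi_eq[OF deg_H1 u v, of H2] by (simp add: R_def K_def X_def distrib_left)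
  moreover have "0 \<le> X" "0 \<le> J / R" "0 \<le> K / R"
    using \<open>R > 0\<close> by (simp_all add: X_def K_def)
  ultimately have "J / R \<le> 1/16" "K / R \<le> 1/16"
    using small by linarith+
  then have "16 * real J \<le> R" "16 * K \<le> R"
    using \<open>R > 0\<close> by (simp_all add: field_simps)
  with \<open>1 \<le> K\<close> have "4 * (1 + real J + K) \<le> R"
    by (smt (verit))
  then show ?thesis
    by (simp add: R_def K_def distrib_left)
qed

end

lemma relative_error_le:
  fixes f m t1 t2 t4 :: real
  assumes nonneg: "0 \<le> f" "0 \<le> m" "0 \<le> t1" "0 \<le> t2" "0 \<le> t4"
    and small: "t1 + t2 + m + t4 \<le> 1/16"
    and upper: "f * (1 - 2 * t1 - 2 * t2) \<le> m"
    and lower: "(1 - f) * m * (1 - 2 * t1 - 4 * t4) \<le> f"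
  shows "\<bar>f - m\<bar> \<le> 5 * m * (t1 + t2 + m + t4)"
proof -
  have "f * (7/8) \<le> f * (1 - 2 * t1 - 2 * t2)"
    using nonneg small by (intro mult_left_mono) auto
  then have f_le: "f \<le> 8/7 * m"
    using upper by linarith
  have "f - m \<le> f * (2 * t1 + 2 * t2)"
    using upper by (simp add: algebra_simps)
  also have "\<dots> \<le> (8/7 * m) * (2 * t1 + 2 * t2)"
    using f_le nonneg by (intro mult_right_mono) auto
  also have "\<dots> = m * (16/7 * (t1 + t2))"
    by (simp add: algebra_simps)
  also have "\<dots> \<le> m * (5 * (t1 + t2 + m + t4))"
    using nonneg by (intro mult_left_mono) auto
  finally have "f - m \<le> 5 * m * (t1 + t2 + m + t4)"
    by (simp only: mult.assoc)
  moreover have "m - f \<le> m * (2 * t1 + 4 * t4 + f)"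
  proof -
    have "0 \<le> m * f * (2 * t1 + 4 * t4)"
      using nonneg by simp
    then show ?thesis
      using lower by (simp add: algebra_simps)
  qed
  moreover have "m * (2 * t1 + 4 * t4 + f) \<le> m * (5 * (t1 + t2 + m + t4))"
    using f_le nonneg by (intro mult_left_mono) auto
  ultimately show ?thesis
    by (simp add: abs_le_iff algebra_simps)
qed

context bipartite_degrees
begin

theorem cond_prob_estimate:
  assumes H1: "H1 \<subseteq> U \<times> V" and H2: "H2 \<subseteq> U \<times> V" and deg_H1: "\<forall>w \<in> U \<union> V. degG H1 w \<le> d w"
    and u: "u \<in> U" and v: "v \<in> V" and uv: "(u, v) \<notin> H1" "(u, v) \<notin> H2"
    and H1_lt: "card H1 < M" and nonempty: "cond H1 H2 \<noteq> {}"
    and small: "xi U V d H1 H2 u v \<le> 1/16"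
  shows "\<bar>cond_prob U V d H1 H2 (u, v)
            - (real (d u) - real (degG H1 u)) * (real (d v) - real (degG H1 v)) / (real M - real (card H1))\<bar>
         \<le> 5 * ((real (d u) - real (degG H1 u)) * (real (d v) - real (degG H1 v)) / (real M - real (card H1)))
             * xi U V d H1 H2 u v"
proof -
  define R where "R = real M - card H1"
  define t1 where "t1 = J / R"
  define t2 where "t2 = \<Delta> * (1 + maxdeg U V H2) / R"
  define m where "m = resdeg H1 u * resdeg H1 v / R"
  define t4 where "t4 = (card H2 * maxseq U d * maxseq V d) / R\<^sup>2"
  define f where "f = cond_prob U V d H1 H2 (u, v)"
  have "R > 0"
    using H1_lt by (simp add: R_def)
  have nonneg: "0 \<le> f" "0 \<le> m" "0 \<le> t1" "0 \<le> t2" "0 \<le> t4"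
    using \<open>R > 0\<close> by (simp_all add: f_def cond_prob_def m_def t1_def t2_def t4_def)
  have main_eq: "(real (d u) - real (degG H1 u)) * (real (d v) - real (degG H1 v)) / (real M - real (card H1)) = m"
    using deg_H1 u v by (simp add: m_def R_def of_nat_diff)
  have xi: "xi U V d H1 H2 u v = t1 + t2 + m + t4"
    unfolding xi_eq[OF deg_H1 u v] by (simp add: t1_def t2_def m_def t4_def R_def)
  have upper: "f * (1 - 2 * t1 - 2 * t2) \<le> m"
    using cond_prob_upper[OF H2 u v uv(1) H1_lt nonempty]
    by (simp add: f_def m_def t1_def t2_def R_def mult.assoc)
  have lower: "(1 - f) * m * (1 - 2 * t1 - 4 * t4) \<le> f"
  proof (cases "resdeg H1 u = 0")
    case True
    then show ?thesis
      using nonneg by (simp add: m_def)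
  next
    case False
    then have "4 * (1 + J + \<Delta> * (1 + maxdeg U V H2)) \<le> real M - card H1"
      using large_of_xi_le[OF deg_H1 u v H1_lt _ small] by simp
    then show ?thesis
      using cond_prob_lower[OF H1 H2 u v uv H1_lt nonempty]
      by (simp add: f_def m_def t1_def t4_def R_def)
  qed
  show ?thesis
    using relative_error_le[OF nonneg _ upper lower] small
    by (simp add: f_def main_eq xi)
qed

end

theorem mainTheorem17:
  shows "\<exists>\<epsilon>>0. \<exists>C. \<forall>U V d H1 H2 u v.
     finite U \<and> finite V \<and> U \<inter> V = {} \<and>
     H1 \<subseteq> U \<times> V \<and> H2 \<subseteq> U \<times> V \<and> H1 \<inter> H2 = {} \<and>
     (\<forall>w \<in> U \<union> V. degG H1 w \<le> d w) \<and>
     u \<in> U \<and> v \<in> V \<and> (u, v) \<notin> H1 \<and> (u, v) \<notin> H2 \<and>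
     card H1 < Msum U d \<and>
     cond_set U V d H1 H2 \<noteq> {} \<and>
     xi U V d H1 H2 u v \<le> \<epsilon>
     \<longrightarrow>
     (let main = (real (d u) - real (degG H1 u)) * (real (d v) - real (degG H1 v))
                   / (real (Msum U d) - real (card H1))
      in \<bar>cond_prob U V d H1 H2 (u, v) - main\<bar> \<le> C * main * xi U V d H1 H2 u v)"
proof (rule exI[of _ "1/16"], intro conjI exI[of _ 5] allI impI, goal_cases)
  case 1
  show ?case
    by simp
next
  case (2 U V d H1 H2 u v)
  then interpret bipartite_degrees U V d
    by unfold_locales auto
  show ?case
    unfolding Let_def using 2 by (intro cond_prob_estimate) auto
qed

end
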